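(* Let $k$ be a positive integer and $m,n$ nonnegative integers. Let $r:=m \bmod k$ and $s:=n \bmod k$. Then \[ \nu_k(K_{m,n}) \le \frac{(m-r)(n-s)}{4k^2}(m-k+r)(n-k+s) \le \frac{1}{k^2}\binom{m}{2}\binom{n}{2}. \]
   Context: A book with $k$ pages consists of a line (the spine) and $k$ half-planes (the pages) whose common boundary is the spine. A $k$-page drawing of a graph places all vertices on the spine and draws each edge inside a single page (edges may cross). The $k$-page crossing number $\nu_k(G)$ is the minimum number of crossings over all $k$-page drawings of $G$. *)

theory Defs
  imports Complex_Main
begin

text \<open>A k-page drawing is determined by an injective placement of the vertices on the spine
(pos) and an assignment of each edge to one of the pages 0..k-1 (pg).  With edges drawn
optimally (as semicircles), two edges on the same page cross exactly when their
endpoints interleave along the spine; the count below counts each crossing pair once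
(ordered so that the first edge starts further left).\<close>

definition interleave :: "('a \<Rightarrow> nat) \<Rightarrow> 'a set \<Rightarrow> 'a set \<Rightarrow> bool" where
  "interleave pos e f \<longleftrightarrow> (\<exists>a b c d. e = {a, b} \<and> f = {c, d} \<and>
      pos a < pos c \<and> pos c < pos b \<and> pos b < pos d)"

definition book_crossings :: "('a \<Rightarrow> nat) \<Rightarrow> ('a set \<Rightarrow> nat) \<Rightarrow> 'a set set \<Rightarrow> nat" where
  "book_crossings pos pg E =
     card {(e, f). e \<in> E \<and> f \<in> E \<and> pg e = pg f \<and> interleave pos e f}"

definition book_drawing :: "nat \<Rightarrow> 'a set \<Rightarrow> 'a set set \<Rightarrow> ('a \<Rightarrow> nat) \<Rightarrow> ('a set \<Rightarrow> nat) \<Rightarrow> bool" where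
  "book_drawing k V E pos pg \<longleftrightarrow> inj_on pos V \<and> (\<forall>e\<in>E. pg e < k)"

definition book_crossing_number :: "nat \<Rightarrow> 'a set \<Rightarrow> 'a set set \<Rightarrow> nat" where
  "book_crossing_number k V E =
     (LEAST c. \<exists>pos pg. book_drawing k V E pos pg \<and> c = book_crossings pos pg E)"

definition Kmn_V :: "nat \<Rightarrow> nat \<Rightarrow> (nat + nat) set" where
  "Kmn_V m n = Inl ` {..<m} \<union> Inr ` {..<n}"

definition Kmn_E :: "nat \<Rightarrow> nat \<Rightarrow> (nat + nat) set set" where
  "Kmn_E m n = {{Inl i, Inr j} | i j. i < m \<and> j < n}"

end

theory Submission
  imports Defs "HOL-Library.Product_Lexorder"
begin

text \<open>Put the left vertices $i < m$ and the right vertices $j < n$ on the spine in $2k$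
  consecutive blocks $A_0, B_0, A_1, B_1, \ldots, A_{k-1}, B_{k-1}$, where $A_u$ holds the $i$
  with $i \bmod k = u$ and $B_v$ the $j$ with $j \bmod k = v$, each block ordered by index, and
  draw the edge $\{i, j\}$ on page $(i + j) \bmod k$.  Two edges on a common page interleave only
  if they join the same blocks $A_u$ and $B_v$, with $i < i'$ and $j < j'$.  So the crossings are
  at most $P(m)\,P(n)$, where $P(m)$ counts the pairs $i < i' < m$ with $i \equiv i' \pmod k$;
  counting residue classes, $2 P(m) = \lfloor m/k \rfloor (m + (m \bmod k) - k)
  = (m - r)(m - k + r)/k \le (m^2 - m)/k$.\<close>

definition residue_pairs :: "nat \<Rightarrow> nat \<Rightarrow> (nat \<times> nat) set" where
  "residue_pairs k m = {(i, i'). i < i' \<and> i' < m \<and> i mod k = i' mod k}"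

lemma finite_residue_pairs: "finite (residue_pairs k m)"
  by (rule finite_subset[of _ "{..<m} \<times> {..<m}"]) (auto simp: residue_pairs_def)

lemma residue_pairs_Suc:
  "residue_pairs k (Suc m) = residue_pairs k m \<union> (\<lambda>i. (i, m)) ` {i. i < m \<and> i mod k = m mod k}"
  by (auto simp: residue_pairs_def less_Suc_eq)

lemma card_less_same_residue_le:
  assumes "k > 0"
  shows "card {i. i < m \<and> i mod k = m mod k} \<le> m div k"
proof -
  have "{i. i < m \<and> i mod k = m mod k} \<subseteq> (\<lambda>t. k * t + m mod k) ` {..<m div k}"
  proof
    fix i assume "i \<in> {i. i < m \<and> i mod k = m mod k}"
    then have "i < m" "i mod k = m mod k" by auto
    moreover have "i = k * (i div k) + i mod k" by simp
    moreover have "i div k < m div k"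
    proof (rule ccontr)
      assume "\<not> i div k < m div k"
      then have "k * (m div k) + m mod k \<le> k * (i div k) + i mod k"
        using \<open>i mod k = m mod k\<close> by (simp only: add_le_cancel_right not_less mult_le_mono2)
      then have "m \<le> i" by (simp only: mult_div_mod_eq)
      with \<open>i < m\<close> show False by simp
    qed
    ultimately have "i = k * (i div k) + m mod k" "i div k < m div k" by simp_all
    then show "i \<in> (\<lambda>t. k * t + m mod k) ` {..<m div k}" by blast
  qed
  then have "card {i. i < m \<and> i mod k = m mod k} \<le> card ((\<lambda>t. k * t + m mod k) ` {..<m div k})"
    by (intro card_mono) auto
  also have "\<dots> \<le> m div k"
    using card_image_le[of "{..<m div k}"] by simp
  finally show ?thesis .
qed

lemma card_residue_pairs_Suc_le:
  assumes "k > 0"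
  shows "card (residue_pairs k (Suc m)) \<le> card (residue_pairs k m) + m div k"
proof -
  have "card (residue_pairs k (Suc m))
      \<le> card (residue_pairs k m) + card ((\<lambda>i. (i, m)) ` {i. i < m \<and> i mod k = m mod k})"
    unfolding residue_pairs_Suc by (rule card_Un_le)
  also have "\<dots> \<le> card (residue_pairs k m) + card {i. i < m \<and> i mod k = m mod k}"
    by (simp add: card_image_le)
  also have "\<dots> \<le> card (residue_pairs k m) + m div k"
    using card_less_same_residue_le[OF assms] by simp
  finally show ?thesis .
qed

lemma residue_pair_bound_Suc:
  assumes "k > 0"
  shows "real (Suc m div k) * (real (Suc m) + real (Suc m mod k) - real k)
       = real (m div k) * (real m + real (m mod k) - real k) + 2 * real (m div k)"
proof -
  have m: "real m = real (m div k) * real k + real (m mod k)"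
    by (metis div_mult_mod_eq of_nat_add of_nat_mult)
  show ?thesis
  proof (cases "Suc (m mod k) = k")
    case True
    then have "Suc m mod k = 0" "Suc m div k = Suc (m div k)" "real k = real (m mod k) + 1"
      by (auto simp: mod_Suc div_Suc)
    then show ?thesis unfolding of_nat_Suc by (simp add: m algebra_simps)
  next
    case False
    then have "Suc m mod k = Suc (m mod k)" "Suc m div k = m div k"
      by (simp_all add: mod_Suc div_Suc)
    then show ?thesis by (simp add: algebra_simps)
  qed
qed

lemma card_residue_pairs_le:
  assumes "k > 0"
  shows "2 * real (card (residue_pairs k m)) \<le> real (m div k) * (real m + real (m mod k) - real k)"
proof (induction m)
  case 0
  then show ?case by (simp add: residue_pairs_def)
next
  case (Suc m)
  then show ?case
    using card_residue_pairs_Suc_le[OF assms, of m] residue_pair_bound_Suc[OF assms, of m]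
    by (simp only: of_nat_le_iff[symmetric] of_nat_add)
qed

lemma real_choose_two: "real (m choose 2) = real m * (real m - 1) / 2"
  by (simp add: choose_two field_char_0_class.of_nat_div algebra_simps)

lemma residue_pair_bound_le_choose_two:
  assumes "k > 0"
  shows "real (m div k) * (real m + real (m mod k) - real k) / 2 \<le> real (m choose 2) / real k"
proof -
  define a r where "a = m div k" and "r = m mod k"
  have m: "real m = real a * real k + real r"
    unfolding a_def r_def by (metis div_mult_mod_eq of_nat_add of_nat_mult)
  have "real m * (real m - 1) - real a * (real m + real r - real k) * real k
      = real a * real k * (real k - 1) + real r * (real r - 1)"
    unfolding m by (simp add: algebra_simps)
  moreover have "real a * real k * (real k - 1) \<ge> 0"
    using assms by simp
  moreover have "real r * (real r - 1) \<ge> 0"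
    by (cases r) simp_all
  ultimately have "real a * (real m + real r - real k) * real k \<le> real m * (real m - 1)"
    by linarith
  then show ?thesis
    unfolding real_choose_two a_def[symmetric] r_def[symmetric] using assms by (simp add: field_simps)
qed

lemma mult_add_less_mult_add_iff:
  fixes a b x y N :: nat
  assumes "x < N" "y < N"
  shows "a * N + x < b * N + y \<longleftrightarrow> a < b \<or> a = b \<and> x < y"
proof -
  have less: "a * N + x < b * N + y" if "a < b" "x < N" for a b x y :: nat
  proof -
    from \<open>a < b\<close> have "Suc a * N \<le> b * N" by (intro mult_le_mono1) simp
    with \<open>x < N\<close> show ?thesis by simp
  qed
  from less[of a b x y] less[of b a y x] assms show ?thesis
    by (cases a b rule: linorder_cases) auto
qed

lemma mod_add_eq_cases:
  fixes u v u' v' k :: nat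
  assumes "u < k" "v < k" "u' < k" "v' < k" "(u + v) mod k = (u' + v') mod k"
  shows "u + v = u' + v' \<or> u + v = u' + v' + k \<or> u' + v' = u + v + k"
proof -
  have reduce: "x mod k = (if x < k then x else x - k)" if "x < 2 * k" for x :: nat
    using that by (auto simp: le_mod_geq)
  show ?thesis
    using assms(5) reduce[of "u + v"] reduce[of "u' + v'"] assms(1-4) by (auto split: if_splits)
qed

lemma double_Suc_double_simps:
  fixes x y :: nat
  shows "2 * x < Suc (2 * y) \<longleftrightarrow> x \<le> y" "Suc (2 * x) < 2 * y \<longleftrightarrow> x < y"
    "2 * x \<le> Suc (2 * y) \<longleftrightarrow> x \<le> y" "Suc (2 * x) \<le> 2 * y \<longleftrightarrow> x < y"
    "2 * x \<noteq> Suc (2 * y)" "Suc (2 * x) \<noteq> 2 * y"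
  by presburger+

fun spine_block :: "nat \<Rightarrow> nat + nat \<Rightarrow> nat" where
  "spine_block k (Inl i) = 2 * (i mod k)"
| "spine_block k (Inr j) = 2 * (j mod k) + 1"

fun vertex_index :: "nat + nat \<Rightarrow> nat" where
  "vertex_index (Inl i) = i"
| "vertex_index (Inr j) = j"

definition spine_key :: "nat \<Rightarrow> nat + nat \<Rightarrow> nat \<times> nat" where
  "spine_key k x = (spine_block k x, vertex_index x)"

definition spine_pos :: "nat \<Rightarrow> nat \<Rightarrow> nat + nat \<Rightarrow> nat" where
  "spine_pos k N x = spine_block k x * N + vertex_index x"

definition page :: "nat \<Rightarrow> (nat + nat) set \<Rightarrow> nat" where
  "page k e = (\<Sum>x\<in>e. vertex_index x) mod k"

lemma inj_spine_key: "inj (spine_key k)"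
proof (rule injI)
  fix x y assume "spine_key k x = spine_key k y"
  then show "x = y"
    by (cases x; cases y) (simp_all add: spine_key_def double_Suc_double_simps)
qed

lemma spine_pos_less_iff:
  assumes "vertex_index x < N" "vertex_index y < N"
  shows "spine_pos k N x < spine_pos k N y \<longleftrightarrow> spine_key k x < spine_key k y"
  using assms by (simp add: spine_pos_def spine_key_def less_prod_def' mult_add_less_mult_add_iff)

lemma interleaving_keys_same_blocks:
  fixes u v u' v' i j i' j' k :: nat
  assumes "u < k" "v < k" "u' < k" "v' < k"
    and "u + v = u' + v' \<or> u + v = u' + v' + k \<or> u' + v' = u + v + k"
    and "{(2 * u, i), (2 * v + 1, j)} = {a, b}" "{(2 * u', i'), (2 * v' + 1, j')} = {c, d}"
    and "a < c" "c < b" "b < d"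
  shows "u = u' \<and> v = v' \<and> i < i' \<and> j < j'"
proof -
  have "a = (2 * u, i) \<and> b = (2 * v + 1, j) \<or> a = (2 * v + 1, j) \<and> b = (2 * u, i)"
       "c = (2 * u', i') \<and> d = (2 * v' + 1, j') \<or> c = (2 * v' + 1, j') \<and> d = (2 * u', i')"
    using assms(6,7) by (auto simp: doubleton_eq_iff)
  then show ?thesis
    using assms(1-5,8-10) by (auto simp: double_Suc_double_simps)
qed

lemma interleave_same_page_imp_same_blocks:
  assumes "k > 0" "i < N" "j < N" "i' < N" "j' < N"
    and "page k {Inl i, Inr j} = page k {Inl i', Inr j'}"
    and "interleave (spine_pos k N) {Inl i, Inr j} {Inl i', Inr j'}"
  shows "i mod k = i' mod k \<and> j mod k = j' mod k \<and> i < i' \<and> j < j'"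
proof -
  obtain a b c d where ab: "{Inl i, Inr j} = {a, b}" and cd: "{Inl i', Inr j'} = {c, d}"
    and pos: "spine_pos k N a < spine_pos k N c" "spine_pos k N c < spine_pos k N b"
      "spine_pos k N b < spine_pos k N d"
    using assms(7) unfolding interleave_def by blast
  have "vertex_index x < N" if "x \<in> {a, b} \<union> {c, d}" for x
  proof -
    from that have "x \<in> {Inl i, Inr j, Inl i', Inr j'}"
      unfolding ab[symmetric] cd[symmetric] by blast
    with assms(2-5) show ?thesis by auto
  qed
  then have keys: "spine_key k a < spine_key k c" "spine_key k c < spine_key k b"
      "spine_key k b < spine_key k d"
    using pos by (simp_all add: spine_pos_less_iff)
  have "spine_key k ` {Inl i, Inr j} = {spine_key k a, spine_key k b}"
       "spine_key k ` {Inl i', Inr j'} = {spine_key k c, spine_key k d}"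
    using ab cd by simp_all
  then have blocks: "{(2 * (i mod k), i), (2 * (j mod k) + 1, j)} = {spine_key k a, spine_key k b}"
      "{(2 * (i' mod k), i'), (2 * (j' mod k) + 1, j')} = {spine_key k c, spine_key k d}"
    by (simp_all add: spine_key_def)
  have "(i mod k + j mod k) mod k = (i' mod k + j' mod k) mod k"
    using assms(6) by (simp add: page_def mod_add_eq)
  then have "i mod k + j mod k = i' mod k + j' mod k
      \<or> i mod k + j mod k = i' mod k + j' mod k + k
      \<or> i' mod k + j' mod k = i mod k + j mod k + k"
    using \<open>k > 0\<close> by (intro mod_add_eq_cases) simp_all
  from interleaving_keys_same_blocks[OF _ _ _ _ this blocks keys] show ?thesis
    using \<open>k > 0\<close> by simp
qed

lemma book_drawing_spine:
  assumes "k > 0"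
  shows "book_drawing k (Kmn_V m n) (Kmn_E m n) (spine_pos k (m + n)) (page k)"
proof -
  have "inj_on (spine_pos k (m + n)) (Kmn_V m n)"
  proof (rule inj_onI)
    fix x y assume "x \<in> Kmn_V m n" "y \<in> Kmn_V m n"
      and eq: "spine_pos k (m + n) x = spine_pos k (m + n) y"
    then have "vertex_index x < m + n" "vertex_index y < m + n"
      by (auto simp: Kmn_V_def)
    with eq have "\<not> spine_key k x < spine_key k y" "\<not> spine_key k y < spine_key k x"
      by (simp_all add: spine_pos_less_iff[symmetric])
    then have "spine_key k x = spine_key k y"
      by (meson linorder_neqE)
    then show "x = y" by (rule injD[OF inj_spine_key])
  qed
  moreover have "\<forall>e\<in>Kmn_E m n. page k e < k"
    using assms by (simp add: page_def)
  ultimately show ?thesis by (simp add: book_drawing_def)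
qed

lemma book_crossings_spine_le:
  assumes "k > 0"
  shows "book_crossings (spine_pos k (m + n)) (page k) (Kmn_E m n)
    \<le> card (residue_pairs k m) * card (residue_pairs k n)"
proof -
  define edges :: "(nat \<times> nat) \<times> nat \<times> nat \<Rightarrow> (nat + nat) set \<times> (nat + nat) set"
    where "edges = (\<lambda>((i, i'), (j, j')). ({Inl i, Inr j}, {Inl i', Inr j'}))"
  have "{(e, f). e \<in> Kmn_E m n \<and> f \<in> Kmn_E m n \<and> page k e = page k f
      \<and> interleave (spine_pos k (m + n)) e f} \<subseteq> edges ` (residue_pairs k m \<times> residue_pairs k n)"
  proof (clarify)
    fix e f assume "e \<in> Kmn_E m n" "f \<in> Kmn_E m n" and "page k e = page k f"
      and "interleave (spine_pos k (m + n)) e f"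
    moreover obtain i j where e: "e = {Inl i, Inr j}" "i < m" "j < n"
      using \<open>e \<in> Kmn_E m n\<close> unfolding Kmn_E_def by blast
    moreover obtain i' j' where f: "f = {Inl i', Inr j'}" "i' < m" "j' < n"
      using \<open>f \<in> Kmn_E m n\<close> unfolding Kmn_E_def by blast
    ultimately have "i mod k = i' mod k \<and> j mod k = j' mod k \<and> i < i' \<and> j < j'"
      by (intro interleave_same_page_imp_same_blocks[OF \<open>k > 0\<close>]) simp_all
    with e f have "((i, i'), (j, j')) \<in> residue_pairs k m \<times> residue_pairs k n"
      by (simp add: residue_pairs_def)
    moreover have "(e, f) = edges ((i, i'), (j, j'))"
      by (simp add: edges_def e f)
    ultimately show "(e, f) \<in> edges ` (residue_pairs k m \<times> residue_pairs k n)"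
      by (rule rev_image_eqI)
  qed
  then have "book_crossings (spine_pos k (m + n)) (page k) (Kmn_E m n)
      \<le> card (edges ` (residue_pairs k m \<times> residue_pairs k n))"
    unfolding book_crossings_def by (intro card_mono) (simp_all add: finite_residue_pairs)
  also have "\<dots> \<le> card (residue_pairs k m \<times> residue_pairs k n)"
    by (intro card_image_le) (simp add: finite_residue_pairs)
  finally show ?thesis by (simp add: card_cartesian_product)
qed

lemma book_crossing_number_le:
  "book_drawing k V E pos pg \<Longrightarrow> book_crossing_number k V E \<le> book_crossings pos pg E"
  unfolding book_crossing_number_def by (rule Least_le) blast

theorem theorem6:
  fixes k m n :: nat
  assumes "k > 0"
  defines "r \<equiv> m mod k" and "s \<equiv> n mod k"
  shows "real (book_crossing_number k (Kmn_V m n) (Kmn_E m n))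
           \<le> (real (m - r) * real (n - s)) / (4 * real k ^ 2)
              * (real m - real k + real r) * (real n - real k + real s)
       \<and> (real (m - r) * real (n - s)) / (4 * real k ^ 2)
              * (real m - real k + real r) * (real n - real k + real s)
           \<le> 1 / real k ^ 2 * real (m choose 2) * real (n choose 2)"
proof -
  define P where "P x = real (x - x mod k) * (real x - real k + real (x mod k)) / (2 * real k)"
    for x
  have P_eq: "P x = real (x div k) * (real x + real (x mod k) - real k) / 2" for x
    using assms(1) by (simp add: P_def minus_mod_eq_div_mult)
  have card_le: "real (card (residue_pairs k x)) \<le> P x" for x
    using card_residue_pairs_le[OF assms(1), of x] unfolding P_eq by linarith
  have P_nonneg: "0 \<le> P x" for x
    using card_le[of x] by linarith
  have P_le: "P x \<le> real (x choose 2) / real k" for x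
    unfolding P_eq by (rule residue_pair_bound_le_choose_two[OF assms(1)])
  have "book_crossing_number k (Kmn_V m n) (Kmn_E m n)
      \<le> card (residue_pairs k m) * card (residue_pairs k n)"
    using book_crossing_number_le[OF book_drawing_spine[OF assms(1)]]
      book_crossings_spine_le[OF assms(1)]
    by (rule le_trans)
  then have "real (book_crossing_number k (Kmn_V m n) (Kmn_E m n))
      \<le> real (card (residue_pairs k m)) * real (card (residue_pairs k n))"
    by (simp flip: of_nat_mult)
  also have "\<dots> \<le> P m * P n"
    by (intro mult_mono card_le P_nonneg) simp
  moreover have "P m * P n \<le> real (m choose 2) / real k * (real (n choose 2) / real k)"
    by (intro mult_mono P_le P_nonneg) simp
  ultimately show ?thesis
    unfolding P_def r_def s_def power2_eq_square by (simp add: field_simps)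
qed

end
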